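(* Let $M$ be the $8\times8$ matrix (rows and columns indexed $0,\dots,7$) \[ \begin{pmatrix} \frac18&\frac18&\frac18&\frac18&\frac18&\frac18&\frac18&\frac18\\ \frac38&\frac{59}{168}&\frac{17}{56}&\frac{13}{56}&\frac{23}{168}&\frac1{56}&-\frac18&-\frac7{24}\\ \frac58&\frac{85}{168}&\frac7{24}&\frac5{168}&-\frac5{24}&-\frac{55}{168}&-\frac5{24}&\frac7{24}\\ \frac78&\frac{13}{24}&\frac1{24}&-\frac{31}{88}&-\frac{101}{264}&\frac1{88}&\frac{119}{264}&-\frac{49}{264}\\ \frac98&\frac{23}{56}&-\frac38&-\frac{303}{616}&\frac18&\frac{309}{616}&-\frac38&\frac7{88}\\ \frac{11}8&\frac{11}{168}&-\frac{121}{168}&\frac1{56}&\frac{103}{168}&-\frac{363}{728}&\frac{53}{312}&-\frac7{312}\\ \frac{13}8&-\frac{13}{24}&-\frac{13}{24}&\frac{221}{264}&-\frac{13}{24}&\frac{53}{264}&-\frac1{24}&\frac1{264}\\ \frac{15}8&-\frac{35}{24}&\frac78&-\frac{35}{88}&\frac{35}{264}&-\frac{35}{1144}&\frac5{1144}&-\frac1{3432} \end{pmatrix}. \] Consider real vectors $\tilde A=(\tilde A_0,\dots,\tilde A_7)$, $\tilde B=(\tilde B_0,\dots,\tilde B_7)$ satisfying: $\tilde A_0=\tilde B_0=1$; $0\le\tilde A_k\le\tilde B_k$ for $0\le k\le7$; $\sum_k\tilde A_k=4$; $\sum_k\tilde B_k=16$; $\tilde B=2M\tilde A$; $\tilde A_1=\tilde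 B_1$; and $\tilde A_2=\tilde B_2$. Then the unique solution is \[ \tilde A=(1,0,0,0,0,0,3,0),\qquad \tilde B=(1,0,0,\tfrac{49}{11},0,\tfrac{49}{13},3,\tfrac{540}{143}). \]
   Context: This is the normalized intrinsic linear program for two-dimensional codes of depth 3 (detecting the spin-1 and spin-2 sectors) in the spin-$7/2$ irrep $V_{7/2}\cong\mathrm{Sym}^7(\mathbb C^2)$ of $\mathrm{SU}(2)$: $M$ is the unnormalized MacWilliams matrix $M_{k_1k_2}=(-1)^{7+k_1+k_2}(2k_1+1)\{\begin{smallmatrix}7/2&7/2&k_1\\7/2&7/2&k_2\end{smallmatrix}\}$ (Wigner $6j$-symbol), and normalized enumerators are $\tilde A_k=\frac N{K^2}A_k(P,P)$, $\tilde B_k=\frac NKB_k(P,P)$ with $N=8$, $K=2$. *)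

theory Defs
  imports Complex_Main
begin

text \<open>The 8x8 (normalized) MacWilliams matrix, rows and columns indexed 0..7,
  entries given as a list of rows.\<close>

definition MW_rows :: "real list list" where
  "MW_rows = [
    [1/8, 1/8, 1/8, 1/8, 1/8, 1/8, 1/8, 1/8],
    [3/8, 59/168, 17/56, 13/56, 23/168, 1/56, -1/8, -7/24],
    [5/8, 85/168, 7/24, 5/168, -5/24, -55/168, -5/24, 7/24],
    [7/8, 13/24, 1/24, -31/88, -101/264, 1/88, 119/264, -49/264],
    [9/8, 23/56, -3/8, -303/616, 1/8, 309/616, -3/8, 7/88],
    [11/8, 11/168, -121/168, 1/56, 103/168, -363/728, 53/312, -7/312],
    [13/8, -13/24, -13/24, 221/264, -13/24, 53/264, -1/24, 1/264],
    [15/8, -35/24, 7/8, -35/88, 35/264, -35/1144, 5/1144, -1/3432]]"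

definition MW :: "nat \<Rightarrow> nat \<Rightarrow> real" where
  "MW i j = (MW_rows ! i) ! j"

text \<open>Feasibility conditions of the linear program; vectors are functions on
  indices 0..7 (values at other indices are irrelevant).\<close>

definition LP_feasible :: "(nat \<Rightarrow> real) \<Rightarrow> (nat \<Rightarrow> real) \<Rightarrow> bool" where
  "LP_feasible A B \<longleftrightarrow>
     A 0 = 1 \<and> B 0 = 1 \<and>
     (\<forall>k\<le>7. 0 \<le> A k \<and> A k \<le> B k) \<and>
     (\<Sum>k\<le>7. A k) = 4 \<and>
     (\<Sum>k\<le>7. B k) = 16 \<and>
     (\<forall>i\<le>7. B i = 2 * (\<Sum>j\<le>7. MW i j * A j)) \<and>
     A 1 = B 1 \<and> A 2 = B 2"

definition A_sol :: "real list" where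
  "A_sol = [1, 0, 0, 0, 0, 0, 3, 0]"

definition B_sol :: "real list" where
  "B_sol = [1, 0, 0, 49/11, 0, 49/13, 3, 540/143]"

end

theory Submission
  imports Defs
begin

text \<open>Rows 1 and 2 of \<open>B = 2 M A\<close>, the two equations \<open>A\<^sub>1 = B\<^sub>1\<close>, \<open>A\<^sub>2 = B\<^sub>2\<close>, the
  normalisations \<open>A\<^sub>0 = 1\<close> and \<open>\<Sum> A = 4\<close> combine linearly into an identity
  \<open>\<Sum>\<^sub>k c\<^sub>k A\<^sub>k = 0\<close> with \<open>c\<^sub>k > 0\<close> for every \<open>k \<notin> {0, 6}\<close>.  Since \<open>A \<ge> 0\<close>, this forces
  \<open>A\<^sub>k = 0\<close> off \<open>{0, 6}\<close>, hence \<open>A\<^sub>6 = 3\<close>; then \<open>B = 2 M A\<close> is determined by \<open>A\<close>.\<close>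

lemma sum_atMost_7:
  fixes f :: "nat \<Rightarrow> 'a::comm_monoid_add"
  shows "(\<Sum>k\<le>7. f k) = f 0 + f 1 + f 2 + f 3 + f 4 + f 5 + f 6 + f 7"
  by (simp add: numeral_eq_Suc add.commute add.left_commute)

lemma all_le_7_iff:
  "(\<forall>k\<le>(7::nat). P k) \<longleftrightarrow> P 0 \<and> P 1 \<and> P 2 \<and> P 3 \<and> P 4 \<and> P 5 \<and> P 6 \<and> P 7"
proof -
  have "{..(7::nat)} = {0, 1, 2, 3, 4, 5, 6, 7}" by auto
  then show ?thesis by (metis atMost_iff insert_iff singletonD)
qed

lemma B_sol_eq_MW_A_sol:
  assumes "i \<le> 7"
  shows "B_sol ! i = 2 * (\<Sum>j\<le>7. MW i j * A_sol ! j)"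
proof -
  have "\<forall>i\<le>7. B_sol ! i = 2 * (\<Sum>j\<le>7. MW i j * A_sol ! j)"
    unfolding all_le_7_iff sum_atMost_7 MW_def MW_rows_def A_sol_def B_sol_def
    by (simp add: numeral_eq_Suc)
  then show ?thesis using assms by blast
qed

lemma LP_feasible_sol: "LP_feasible (\<lambda>k. A_sol ! k) (\<lambda>k. B_sol ! k)"
proof -
  have "\<forall>i\<le>7. B_sol ! i = 2 * (\<Sum>j\<le>7. MW i j * A_sol ! j)"
    using B_sol_eq_MW_A_sol by blast
  moreover have "\<forall>k\<le>7. 0 \<le> A_sol ! k \<and> A_sol ! k \<le> B_sol ! k"
    unfolding all_le_7_iff A_sol_def B_sol_def by (simp add: numeral_eq_Suc)
  moreover have "(\<Sum>k\<le>7. A_sol ! k) = 4" "(\<Sum>k\<le>7. B_sol ! k) = 16"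
    unfolding sum_atMost_7 A_sol_def B_sol_def by (simp_all add: numeral_eq_Suc)
  ultimately show ?thesis
    unfolding LP_feasible_def by (simp add: A_sol_def B_sol_def)
qed

lemma LP_feasible_certificate:
  assumes "LP_feasible A B"
  shows "2/3 * A 1 + 6/7 * A 2 + 20/21 * A 3 + 11/21 * A 4 + 1/6 * A 5 + 1/6 * A 7 = 0"
proof -
  have row1: "B 1 = 2 * (\<Sum>j\<le>7. MW 1 j * A j)"
    and row2: "B 2 = 2 * (\<Sum>j\<le>7. MW 2 j * A j)"
    and total: "(\<Sum>k\<le>7. A k) = 4"
    and "A 0 = 1" "A 1 = B 1" "A 2 = B 2"
    using assms unfolding LP_feasible_def by simp_all
  have "2/3 * A 1 + 6/7 * A 2 + 20/21 * A 3 + 11/21 * A 4 + 1/6 * A 5 + 1/6 * A 7 =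
      11/24 * ((\<Sum>k\<le>7. A k) - 4) + (B 1 - A 1) + 1/2 * (B 2 - A 2) + 11/6 * (1 - A 0)"
    unfolding row1 row2 sum_atMost_7 MW_def MW_rows_def
    by (simp add: numeral_eq_Suc field_simps)
  also have "\<dots> = 0"
    using total \<open>A 0 = 1\<close> \<open>A 1 = B 1\<close> \<open>A 2 = B 2\<close> by simp
  finally show ?thesis .
qed

lemma LP_feasible_A_eq_A_sol:
  assumes "LP_feasible A B" and "k \<le> 7"
  shows "A k = A_sol ! k"
proof -
  have nonneg: "\<forall>k\<le>7. 0 \<le> A k" and "A 0 = 1" and total: "(\<Sum>k\<le>7. A k) = 4"
    using assms(1) unfolding LP_feasible_def by simp_all
  moreover have "A 1 = 0 \<and> A 2 = 0 \<and> A 3 = 0 \<and> A 4 = 0 \<and> A 5 = 0 \<and> A 7 = 0"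
    using LP_feasible_certificate[OF assms(1)] nonneg unfolding all_le_7_iff by linarith
  moreover have "A 6 = 3"
    using total calculation unfolding sum_atMost_7 by simp
  ultimately have "\<forall>k\<le>7. A k = A_sol ! k"
    unfolding all_le_7_iff A_sol_def by (simp add: numeral_eq_Suc)
  then show ?thesis using assms(2) by blast
qed

lemma LP_feasible_B_eq_B_sol:
  assumes "LP_feasible A B" and "i \<le> 7"
  shows "B i = B_sol ! i"
proof -
  have "B i = 2 * (\<Sum>j\<le>7. MW i j * A j)"
    using assms unfolding LP_feasible_def by blast
  also have "\<dots> = 2 * (\<Sum>j\<le>7. MW i j * A_sol ! j)"
    using LP_feasible_A_eq_A_sol[OF assms(1)] by simp
  also have "\<dots> = B_sol ! i"
    using B_sol_eq_MW_A_sol[OF assms(2)] by simp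
  finally show ?thesis .
qed

theorem mainTheorem13:
  shows "LP_feasible (\<lambda>k. A_sol ! k) (\<lambda>k. B_sol ! k) \<and>
         (\<forall>A B. LP_feasible A B \<longrightarrow>
            (\<forall>k\<le>7. A k = A_sol ! k \<and> B k = B_sol ! k))"
  using LP_feasible_sol LP_feasible_A_eq_A_sol LP_feasible_B_eq_B_sol by blast

end
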